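(* Let $\mu,\nu$ be Borel probability measures on $\mathbb{R}^d$ such that: (a) there is a bounded connected open Lipschitz domain $\Omega\subset B(0,1)$ with $\mu(dx)=\rho_\mu(x)\mathbf 1_\Omega(x)dx$ and $0<\underline\lambda_\mu\le\rho_\mu\le\overline\lambda_\mu<\infty$ a.e. on $\Omega$; (b) $\nu\ll\mathrm{Leb}$, $\operatorname{spt}\nu\subseteq B(0,1)$, $d\nu/dy\le\overline\lambda_\nu<\infty$ on $\operatorname{spt}\nu$; (c) the Monge map $T=\nabla\varphi$ is $L$-Lipschitz. Let $C_{\mathrm{val}}$ be a constant with $C_{\mathrm{val}}^{-1}\varepsilon^{2/(2+d)}\le\Delta_\varepsilon\le C_{\mathrm{val}}\varepsilon^{2/(2+d)}$ for all $\varepsilon\in(0,1]$. Then for every $t>0$ and $\varepsilon\in(0,1]$, $$\pi_\varepsilon\big(\{(x,y):\|y-T(x)\|\ge t\}\big)\le\frac{2LC_{\mathrm{val}}}{t^2}\varepsilon^{\frac{2}{d+2}}.$$ Equivalently, for every $\eta\in(0,1)$, $$\pi_\varepsilon\Big(\big\{(x,y):\|y-T(x)\|\le\sqrt{2LC_{\mathrm{val}}}\,\eta^{-1/2}\varepsilon^{\frac1{d+2}}\big\}\Big)\ge1-\eta.$$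
   Context: Cost $c(x,y)=\frac12\|x-y\|^2$, $P=\mu\otimes\nu$, $\mathrm{OT}(\mu,\nu)=\inf_{\pi\in\Pi(\mu,\nu)}\int c\,d\pi$; $T=\nabla\varphi$ ($\varphi$ convex) is the Brenier optimal map with $T_\#\mu=\nu$. For $\varepsilon>0$, $\mathrm{QOT}_\varepsilon(\mu,\nu)=\inf_{\pi\in\Pi(\mu,\nu),\pi\ll P}\{\int c\,d\pi+\frac\varepsilon2\|\frac{d\pi}{dP}\|^2_{L^2(P)}\}$, $\pi_\varepsilon$ its unique optimizer, $\Delta_\varepsilon=\mathrm{QOT}_\varepsilon(\mu,\nu)-\mathrm{OT}(\mu,\nu)$. *)

theory Defs
  imports "HOL-Probability.Probability"
begin

definition qcost :: "'a::euclidean_space \<Rightarrow> 'a \<Rightarrow> real" where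
  "qcost x y = (1/2) * (norm (x - y))\<^sup>2"

definition couplings :: "'a measure \<Rightarrow> 'b measure \<Rightarrow> ('a \<times> 'b) measure set" where
  "couplings \<mu> \<nu> = {\<pi>. sets \<pi> = sets (\<mu> \<Otimes>\<^sub>M \<nu>) \<and> distr \<pi> \<mu> fst = \<mu> \<and> distr \<pi> \<nu> snd = \<nu>}"

definition OT :: "'a::euclidean_space measure \<Rightarrow> 'a measure \<Rightarrow> ennreal" where
  "OT \<mu> \<nu> = (INF \<pi>\<in>couplings \<mu> \<nu>. \<integral>\<^sup>+ z. ennreal (qcost (fst z) (snd z)) \<partial>\<pi>)"

definition qot_obj :: "real \<Rightarrow> 'a::euclidean_space measure \<Rightarrow> 'a measure \<Rightarrow> ('a \<times> 'a) measure \<Rightarrow> ennreal" where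
  "qot_obj \<epsilon> \<mu> \<nu> \<pi> =
     (\<integral>\<^sup>+ z. ennreal (qcost (fst z) (snd z)) \<partial>\<pi>)
     + ennreal (\<epsilon> / 2) * (\<integral>\<^sup>+ z. (RN_deriv (\<mu> \<Otimes>\<^sub>M \<nu>) \<pi> z)\<^sup>2 \<partial>(\<mu> \<Otimes>\<^sub>M \<nu>))"

definition qot_admissible :: "'a::euclidean_space measure \<Rightarrow> 'a measure \<Rightarrow> ('a \<times> 'a) measure set" where
  "qot_admissible \<mu> \<nu> = {\<pi> \<in> couplings \<mu> \<nu>. absolutely_continuous (\<mu> \<Otimes>\<^sub>M \<nu>) \<pi>}"

definition QOT :: "real \<Rightarrow> 'a::euclidean_space measure \<Rightarrow> 'a measure \<Rightarrow> ennreal" where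
  "QOT \<epsilon> \<mu> \<nu> = (INF \<pi>\<in>qot_admissible \<mu> \<nu>. qot_obj \<epsilon> \<mu> \<nu> \<pi>)"

definition is_qot_optimizer :: "real \<Rightarrow> 'a::euclidean_space measure \<Rightarrow> 'a measure \<Rightarrow> ('a \<times> 'a) measure \<Rightarrow> bool" where
  "is_qot_optimizer \<epsilon> \<mu> \<nu> \<pi> \<longleftrightarrow> \<pi> \<in> qot_admissible \<mu> \<nu> \<and> qot_obj \<epsilon> \<mu> \<nu> \<pi> = QOT \<epsilon> \<mu> \<nu>"

text \<open>Delta_eps = QOT_eps - OT (both finite under the standing assumptions).\<close>
definition Delta :: "real \<Rightarrow> 'a::euclidean_space measure \<Rightarrow> 'a measure \<Rightarrow> real" where
  "Delta \<epsilon> \<mu> \<nu> = enn2real (QOT \<epsilon> \<mu> \<nu>) - enn2real (OT \<mu> \<nu>)"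

definition spt :: "'a::metric_space measure \<Rightarrow> 'a set" where
  "spt M = {x. \<forall>r>0. emeasure M (ball x r) > 0}"

definition lipschitz_domain :: "'a::euclidean_space set \<Rightarrow> bool" where
  "lipschitz_domain \<Omega> \<longleftrightarrow>
    (\<forall>p\<in>frontier \<Omega>. \<exists>r>0. \<exists>e g M. norm e = 1 \<and> M-lipschitz_on {v. v \<bullet> e = 0} g \<and>
        \<Omega> \<inter> ball p r = {x \<in> ball p r. x \<bullet> e < g (x - (x \<bullet> e) *\<^sub>R e)})"

end

theory Submission
  imports Defs
begin

(* Since T = grad phi is L-Lipschitz, phi obeys the descent inequality
   phi (x + v) <= phi x + T x . v + L/2 |v|^2, which makes the conjugate psi of phi
   strongly convex in the form  x . y - phi x + |y - T x|^2 / (2L) <= psi y,  with equality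
   psi (T x) = x . T x - phi x.  Rewritten with the cost and u = psi - |.|^2/2 this reads
   c(x, y) + u y - c(x, T x) - u (T x) >= |y - T x|^2 / (2L).  Integrating against a coupling pi
   of mu and nu, the u-terms cancel because pi and the graph coupling (id, T)_# mu share the second
   marginal nu; hence  int |y - T x|^2 dpi <= 2L (int c dpi - int c(x, T x) dmu).  For the
   optimizer pi_eps the right-hand side is at most 2L (QOT_eps - OT) = 2L Delta_eps
   <= 2LC eps^(2/(d+2)), and Chebyshev's inequality gives both bounds. *)

lemma has_real_derivative_along_line:
  fixes \<phi> :: "'a::real_inner \<Rightarrow> real"
  assumes "(\<phi> has_derivative (\<lambda>h. D \<bullet> h)) (at (x + s *\<^sub>R v))"
  shows "((\<lambda>s. \<phi> (x + s *\<^sub>R v)) has_real_derivative (D \<bullet> v)) (at s)"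
proof -
  have "((\<lambda>s. x + s *\<^sub>R v) has_derivative (\<lambda>h. h *\<^sub>R v)) (at s)"
    by (auto intro!: derivative_eq_intros)
  from has_derivative_compose[OF this assms]
  have "((\<lambda>s. \<phi> (x + s *\<^sub>R v)) has_derivative (\<lambda>h. D \<bullet> (h *\<^sub>R v))) (at s)" .
  moreover have "(\<lambda>h. D \<bullet> (h *\<^sub>R v)) = (*) (D \<bullet> v)"
    by auto
  ultimately show ?thesis
    by (simp add: has_field_derivative_def)
qed

lemma convex_on_above_gradient:
  fixes \<phi> :: "'a::real_inner \<Rightarrow> real"
  assumes convex: "convex_on UNIV \<phi>" and gradient: "(\<phi> has_derivative (\<lambda>h. D \<bullet> h)) (at x)"
  shows "\<phi> x + D \<bullet> (z - x) \<le> \<phi> z"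
proof -
  define g where "g s = \<phi> (x + s *\<^sub>R (z - x))" for s
  have "convex_on UNIV g"
  proof (rule convex_onI)
    fix t a b :: real assume t: "0 < t" "t < 1"
    have "x + ((1 - t) * a + t * b) *\<^sub>R (z - x)
        = (1 - t) *\<^sub>R (x + a *\<^sub>R (z - x)) + t *\<^sub>R (x + b *\<^sub>R (z - x))"
      by (simp add: algebra_simps)
    then show "g ((1 - t) *\<^sub>R a + t *\<^sub>R b) \<le> (1 - t) * g a + t * g b"
      using convex_onD[OF convex, of t] t unfolding g_def by simp
  qed simp
  moreover have "(g has_real_derivative (D \<bullet> (z - x))) (at 0 within UNIV)"
    unfolding g_def by (rule has_real_derivative_along_line) (simp add: gradient)
  ultimately have "g 1 - g 0 \<ge> D \<bullet> (z - x) * (1 - 0)"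
    by (intro convex_on_imp_above_tangent) auto
  then show ?thesis unfolding g_def by simp
qed

lemma lipschitz_gradient_upper_bound:
  fixes \<phi> :: "'a::real_inner \<Rightarrow> real"
  assumes gradient: "\<And>x. (\<phi> has_derivative (\<lambda>h. T x \<bullet> h)) (at x)"
    and lipschitz: "L-lipschitz_on UNIV T"
  shows "\<phi> (x + v) \<le> \<phi> x + T x \<bullet> v + L / 2 * (norm v)\<^sup>2"
proof -
  define g where "g s = \<phi> (x + s *\<^sub>R v) - s * (T x \<bullet> v) - L / 2 * s\<^sup>2 * (norm v)\<^sup>2" for s
  define g' where "g' s = (T (x + s *\<^sub>R v) - T x) \<bullet> v - L * s * (norm v)\<^sup>2" for s
  have "g 1 \<le> g 0"
  proof (rule DERIV_nonpos_imp_nonincreasing[of 0 1 g])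
    fix s :: real assume s: "0 \<le> s" "s \<le> 1"
    have "(g has_real_derivative g' s) (at s)"
      unfolding g_def g'_def
      by (auto intro!: derivative_eq_intros has_real_derivative_along_line gradient
          simp: power2_eq_square inner_diff_left)
    moreover have "(T (x + s *\<^sub>R v) - T x) \<bullet> v \<le> L * s * (norm v)\<^sup>2"
    proof -
      have "(T (x + s *\<^sub>R v) - T x) \<bullet> v \<le> norm (T (x + s *\<^sub>R v) - T x) * norm v"
        by (rule norm_cauchy_schwarz)
      also have "\<dots> \<le> L * norm (s *\<^sub>R v) * norm v"
        using lipschitz_onD[OF lipschitz, of "x + s *\<^sub>R v" x]
        by (intro mult_right_mono) (auto simp: dist_norm)
      finally show ?thesis using s by (simp add: power2_eq_square mult.assoc)
    qed
    ultimately show "\<exists>y. (g has_real_derivative y) (at s) \<and> y \<le> 0"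
      by (intro exI[of _ "g' s"]) (simp add: g'_def)
  qed simp
  then show ?thesis unfolding g_def by simp
qed

lemma lipschitz_on_SUP:
  fixes f :: "'i \<Rightarrow> 'a::metric_space \<Rightarrow> real"
  assumes nonempty: "K \<noteq> {}" and lipschitz: "\<And>k. k \<in> K \<Longrightarrow> R-lipschitz_on S (f k)"
    and bdd: "\<And>y. y \<in> S \<Longrightarrow> bdd_above ((\<lambda>k. f k y) ` K)"
  shows "R-lipschitz_on S (\<lambda>y. SUP k\<in>K. f k y)"
proof (rule lipschitz_onI)
  show "0 \<le> R"
    using nonempty lipschitz lipschitz_on_nonneg by blast
  have SUP_le: "(SUP k\<in>K. f k y) \<le> (SUP k\<in>K. f k y') + R * dist y y'"
    if "y \<in> S" "y' \<in> S" for y y'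
  proof (rule cSUP_least[OF nonempty])
    fix k assume k: "k \<in> K"
    have "f k y \<le> f k y' + R * dist y y'"
      using lipschitz_onD[OF lipschitz[OF k] that] by (simp add: dist_real_def)
    also have "f k y' \<le> (SUP k\<in>K. f k y')"
      by (rule cSUP_upper[OF k bdd[OF \<open>y' \<in> S\<close>]])
    finally show "f k y \<le> (SUP k\<in>K. f k y') + R * dist y y'"
      by simp
  qed
  fix y y' assume "y \<in> S" "y' \<in> S"
  then show "dist (SUP k\<in>K. f k y) (SUP k\<in>K. f k y') \<le> R * dist y y'"
    using SUP_le[of y y'] SUP_le[of y' y] by (simp add: dist_real_def dist_commute abs_le_iff)
qed

text \<open>The convex conjugate of \<open>\<phi>\<close> with the supremum restricted to a ball: it stays finite and
  Lipschitz without growth assumptions on \<open>\<phi>\<close>, and the strong convexity bound below only needs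
  the ball to contain \<open>x + (y - T x) /\<^sub>R L\<close>.\<close>

definition ball_conjugate :: "real \<Rightarrow> ('a::real_inner \<Rightarrow> real) \<Rightarrow> 'a \<Rightarrow> real" where
  "ball_conjugate R \<phi> y = (SUP z\<in>cball 0 R. z \<bullet> y - \<phi> z)"

lemma bdd_above_ball_conjugate:
  fixes \<phi> :: "'a::euclidean_space \<Rightarrow> real"
  assumes "continuous_on (cball 0 R) \<phi>"
  shows "bdd_above ((\<lambda>z. z \<bullet> y - \<phi> z) ` cball 0 R)"
proof -
  have "continuous_on (cball 0 R) (\<lambda>z. z \<bullet> y - \<phi> z)"
    using assms by (intro continuous_intros)
  then have "compact ((\<lambda>z. z \<bullet> y - \<phi> z) ` cball 0 R)"
    by (rule compact_continuous_image[OF _ compact_cball])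
  then show ?thesis
    by (intro bounded_imp_bdd_above compact_imp_bounded)
qed

lemma lipschitz_ball_conjugate:
  fixes \<phi> :: "'a::euclidean_space \<Rightarrow> real"
  assumes "continuous_on (cball 0 R) \<phi>" and "R \<ge> 0"
  shows "R-lipschitz_on UNIV (ball_conjugate R \<phi>)"
  unfolding ball_conjugate_def
proof (rule lipschitz_on_SUP)
  show "cball (0::'a) R \<noteq> {}"
    using \<open>R \<ge> 0\<close> by simp
  show "bdd_above ((\<lambda>z. z \<bullet> y - \<phi> z) ` cball 0 R)" for y
    by (rule bdd_above_ball_conjugate[OF assms(1)])
  fix z :: 'a assume z: "z \<in> cball 0 R"
  show "R-lipschitz_on UNIV (\<lambda>y. z \<bullet> y - \<phi> z)"
  proof (rule lipschitz_onI)
    fix y y' :: 'a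
    have "dist (z \<bullet> y - \<phi> z) (z \<bullet> y' - \<phi> z) = \<bar>z \<bullet> (y - y')\<bar>"
      by (simp add: dist_real_def inner_diff_right)
    also have "\<dots> \<le> norm z * norm (y - y')"
      by (rule Cauchy_Schwarz_ineq2)
    also have "\<dots> \<le> R * dist y y'"
      using z by (simp add: dist_norm mult_right_mono)
    finally show "dist (z \<bullet> y - \<phi> z) (z \<bullet> y' - \<phi> z) \<le> R * dist y y'" .
  qed (rule \<open>R \<ge> 0\<close>)
qed

lemma ball_conjugate_gradient_le:
  fixes \<phi> :: "'a::real_inner \<Rightarrow> real"
  assumes "convex_on UNIV \<phi>" and "(\<phi> has_derivative (\<lambda>h. D \<bullet> h)) (at x)" and "R \<ge> 0"
  shows "ball_conjugate R \<phi> D \<le> x \<bullet> D - \<phi> x"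
  unfolding ball_conjugate_def
proof (rule cSUP_least)
  show "cball (0::'a) R \<noteq> {}"
    using \<open>R \<ge> 0\<close> by simp
  fix z :: 'a
  show "z \<bullet> D - \<phi> z \<le> x \<bullet> D - \<phi> x"
    using convex_on_above_gradient[OF assms(1,2), of z]
    by (simp add: inner_diff_right inner_commute)
qed

lemma ball_conjugate_strong_lower_bound:
  fixes \<phi> :: "'a::euclidean_space \<Rightarrow> real"
  assumes gradient: "\<And>x. (\<phi> has_derivative (\<lambda>h. T x \<bullet> h)) (at x)"
    and lipschitz: "L-lipschitz_on UNIV T" and "L > 0"
    and radius: "norm x + norm (y - T x) / L \<le> R"
  shows "x \<bullet> y - \<phi> x + (norm (y - T x))\<^sup>2 / (2 * L) \<le> ball_conjugate R \<phi> y"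
proof -
  define w where "w = y - T x"
  define v where "v = w /\<^sub>R L"
  have "norm (x + v) \<le> R"
    using norm_triangle_ineq[of x v] radius \<open>L > 0\<close> by (simp add: v_def w_def divide_inverse_commute)
  have "v \<bullet> w = (norm w)\<^sup>2 / L"
    by (simp add: v_def power2_norm_eq_inner divide_inverse_commute)
  moreover have "L / 2 * (norm v)\<^sup>2 = (norm w)\<^sup>2 / (2 * L)"
    using \<open>L > 0\<close> by (simp add: v_def power2_eq_square field_simps)
  ultimately have "x \<bullet> y - \<phi> x + (norm w)\<^sup>2 / (2 * L)
      = x \<bullet> y - \<phi> x + v \<bullet> w - L / 2 * (norm v)\<^sup>2"
    by simp
  also have "\<dots> = (x + v) \<bullet> y - (\<phi> x + T x \<bullet> v + L / 2 * (norm v)\<^sup>2)"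
    by (simp add: w_def inner_add_left inner_diff_right inner_commute[of v])
  also have "\<dots> \<le> (x + v) \<bullet> y - \<phi> (x + v)"
    using lipschitz_gradient_upper_bound[OF gradient lipschitz, of x v] by simp
  also have "\<dots> \<le> ball_conjugate R \<phi> y"
    unfolding ball_conjugate_def
  proof (rule cSUP_upper)
    show "x + v \<in> cball 0 R"
      using \<open>norm (x + v) \<le> R\<close> by simp
    have "continuous_on (cball 0 R) \<phi>"
      by (rule has_derivative_continuous_on[OF has_derivative_at_withinI[OF gradient]])
    then show "bdd_above ((\<lambda>z. z \<bullet> y - \<phi> z) ` cball 0 R)"
      by (rule bdd_above_ball_conjugate)
  qed
  finally show ?thesis
    unfolding w_def .
qed

lemma ball_conjugate_cost_gap:
  fixes \<phi> :: "'a::euclidean_space \<Rightarrow> real"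
  assumes convex: "convex_on UNIV \<phi>" and gradient: "\<And>x. (\<phi> has_derivative (\<lambda>h. T x \<bullet> h)) (at x)"
    and lipschitz: "L-lipschitz_on UNIV T" and "L > 0"
    and radius: "norm x + norm (y - T x) / L \<le> R"
  defines "u \<equiv> \<lambda>y. ball_conjugate R \<phi> y - (norm y)\<^sup>2 / 2"
  shows "(norm (y - T x))\<^sup>2 / (2 * L) \<le> (qcost x y + u y) - (qcost x (T x) + u (T x))"
proof -
  have "R \<ge> 0"
    using radius \<open>L > 0\<close> by (smt (verit) divide_nonneg_pos norm_ge_zero)
  have shifted_cost: "qcost x y + u y = (norm x)\<^sup>2 / 2 - x \<bullet> y + ball_conjugate R \<phi> y" for y
    by (simp add: u_def qcost_def dot_norm_neg[of x y] field_simps)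
  show ?thesis
    using shifted_cost[of y] shifted_cost[of "T x"]
      ball_conjugate_strong_lower_bound[OF gradient lipschitz \<open>L > 0\<close> radius]
      ball_conjugate_gradient_le[OF convex gradient[of x] \<open>R \<ge> 0\<close>]
    by linarith
qed

lemma continuous_qcost: "continuous_on UNIV (\<lambda>z::'a::euclidean_space \<times> 'a. qcost (fst z) (snd z))"
  unfolding qcost_def by (intro continuous_intros)

lemma integrable_continuous_AE_compact:
  fixes f :: "'a::topological_space \<Rightarrow> real"
  assumes "finite_measure M" and "sets M = sets borel" and "continuous_on UNIV f"
    and "compact K" and "AE x in M. x \<in> K"
  shows "integrable M f"
proof -
  have "compact (f ` K)"
    by (rule compact_continuous_image[OF continuous_on_subset[OF assms(3)] assms(4)]) simp
  then obtain B where "\<forall>x\<in>K. norm (f x) \<le> B"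
    using compact_imp_bounded bounded_iff by (metis image_eqI)
  moreover have "f \<in> borel_measurable M"
    using borel_measurable_continuous_onI[OF assms(3)] measurable_cong_sets[OF assms(2) refl] by blast
  ultimately show ?thesis
    using assms(5) by (intro finite_measure.integrable_const_bound[OF assms(1)]) auto
qed

lemma sets_coupling:
  fixes \<mu> :: "'a::second_countable_topology measure" and \<nu> :: "'b::second_countable_topology measure"
  assumes "\<pi> \<in> couplings \<mu> \<nu>" and "sets \<mu> = sets borel" and "sets \<nu> = sets borel"
  shows "sets \<pi> = sets borel"
proof -
  have "sets \<pi> = sets (\<mu> \<Otimes>\<^sub>M \<nu>)"
    using assms(1) by (simp add: couplings_def)
  also have "\<dots> = sets (borel \<Otimes>\<^sub>M borel)"
    by (rule sets_pair_measure_cong[OF assms(2,3)])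
  finally show ?thesis
    by (simp only: borel_prod)
qed

lemma measurable_fst_coupling: "\<pi> \<in> couplings \<mu> \<nu> \<Longrightarrow> fst \<in> measurable \<pi> \<mu>"
  unfolding couplings_def by (subst measurable_cong_sets[of _ "\<mu> \<Otimes>\<^sub>M \<nu>"]) auto

lemma measurable_snd_coupling: "\<pi> \<in> couplings \<mu> \<nu> \<Longrightarrow> snd \<in> measurable \<pi> \<nu>"
  unfolding couplings_def by (subst measurable_cong_sets[of _ "\<mu> \<Otimes>\<^sub>M \<nu>"]) auto

lemma prob_space_coupling: "\<pi> \<in> couplings \<mu> \<nu> \<Longrightarrow> prob_space \<mu> \<Longrightarrow> prob_space \<pi>"
  by (rule prob_space_distrD[OF measurable_fst_coupling]) (auto simp: couplings_def)

lemma integral_fst_coupling: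
  fixes f :: "'a \<Rightarrow> real"
  assumes "\<pi> \<in> couplings \<mu> \<nu>" and "f \<in> borel_measurable \<mu>"
  shows "(\<integral>z. f (fst z) \<partial>\<pi>) = (\<integral>x. f x \<partial>\<mu>)"
  using integral_distr[OF measurable_fst_coupling[OF assms(1)] assms(2)] assms(1)
  by (simp add: couplings_def)

lemma integral_snd_coupling:
  fixes f :: "'b \<Rightarrow> real"
  assumes "\<pi> \<in> couplings \<mu> \<nu>" and "f \<in> borel_measurable \<nu>"
  shows "(\<integral>z. f (snd z) \<partial>\<pi>) = (\<integral>y. f y \<partial>\<nu>)"
  using integral_distr[OF measurable_snd_coupling[OF assms(1)] assms(2)] assms(1)
  by (simp add: couplings_def)

lemma AE_fst_coupling:
  assumes "\<pi> \<in> couplings \<mu> \<nu>" and "AE x in \<mu>. P x"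
  shows "AE z in \<pi>. P (fst z)"
proof -
  have "distr \<pi> \<mu> fst = \<mu>"
    using assms(1) unfolding couplings_def by blast
  with assms(2) have "AE x in distr \<pi> \<mu> fst. P x"
    by (simp only:)
  then show ?thesis
    by (rule AE_distrD[OF measurable_fst_coupling[OF assms(1)]])
qed

lemma AE_snd_coupling:
  assumes "\<pi> \<in> couplings \<mu> \<nu>" and "AE y in \<nu>. P y"
  shows "AE z in \<pi>. P (snd z)"
proof -
  have "distr \<pi> \<nu> snd = \<nu>"
    using assms(1) unfolding couplings_def by blast
  with assms(2) have "AE y in distr \<pi> \<nu> snd. P y"
    by (simp only:)
  then show ?thesis
    by (rule AE_distrD[OF measurable_snd_coupling[OF assms(1)]])
qed

lemma (in prob_space) prob_abs_le_ge_of_second_moment: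
  fixes f :: "'a \<Rightarrow> real"
  assumes [measurable]: "f \<in> borel_measurable M" and integrable: "integrable M (\<lambda>x. f x ^ 2)"
    and moment: "(\<integral>x. f x ^ 2 \<partial>M) \<le> s\<^sup>2 * \<eta>" and "0 \<le> s" and "0 < \<eta>"
  shows "1 - \<eta> \<le> prob {x \<in> space M. \<bar>f x\<bar> \<le> s}"
proof (cases "s = 0")
  case True
  then have "(\<integral>x. f x ^ 2 \<partial>M) = 0"
    using moment by (simp add: antisym integral_nonneg)
  then have "AE x in M. f x ^ 2 = 0"
    using integral_nonneg_eq_0_iff_AE[OF integrable] by simp
  then have "prob {x \<in> space M. \<bar>f x\<bar> \<le> s} = 1"
    using True by (subst prob_Collect_eq_1) auto
  then show ?thesis
    using \<open>0 < \<eta>\<close> by simp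
next
  case False
  with \<open>0 \<le> s\<close> have "0 < s" by simp
  have "prob {x \<in> space M. \<not> \<bar>f x\<bar> \<le> s} \<le> prob {x \<in> space M. \<bar>f x\<bar> \<ge> s}"
    by (intro finite_measure_mono) auto
  also have "\<dots> \<le> (\<integral>x. f x ^ 2 \<partial>M) / s\<^sup>2"
    using integrable \<open>0 < s\<close> by (intro second_moment_method) auto
  also have "\<dots> \<le> \<eta>"
    using moment \<open>0 < s\<close> by (simp add: divide_le_eq mult.commute)
  finally show ?thesis
    by (subst (asm) prob_neg) auto
qed

lemma QOT_ne_top_of_Delta_pos: "0 < Delta \<epsilon> \<mu> \<nu> \<Longrightarrow> QOT \<epsilon> \<mu> \<nu> \<noteq> \<top>"
  unfolding Delta_def using enn2real_nonneg[of "OT \<mu> \<nu>"]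
  by (metis enn2real_top diff_0 neg_0_less_iff_less not_less)

lemma optimizer_cost_le_QOT:
  assumes "is_qot_optimizer \<epsilon> \<mu> \<nu> \<pi>" and "QOT \<epsilon> \<mu> \<nu> \<noteq> \<top>"
    and "integrable \<pi> (\<lambda>z. qcost (fst z) (snd z))"
  shows "(\<integral>z. qcost (fst z) (snd z) \<partial>\<pi>) \<le> enn2real (QOT \<epsilon> \<mu> \<nu>)"
proof -
  have "ennreal (\<integral>z. qcost (fst z) (snd z) \<partial>\<pi>) = (\<integral>\<^sup>+ z. ennreal (qcost (fst z) (snd z)) \<partial>\<pi>)"
    by (rule nn_integral_eq_integral[OF assms(3), symmetric]) (simp add: qcost_def)
  also have "\<dots> \<le> qot_obj \<epsilon> \<mu> \<nu> \<pi>"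
    unfolding qot_obj_def by simp
  also have "\<dots> = QOT \<epsilon> \<mu> \<nu>"
    using assms(1) by (simp add: is_qot_optimizer_def)
  finally have "enn2real (ennreal (\<integral>z. qcost (fst z) (snd z) \<partial>\<pi>)) \<le> enn2real (QOT \<epsilon> \<mu> \<nu>)"
    using assms(2) by (intro enn2real_mono) (auto simp: top.not_eq_extremum)
  then show ?thesis
    by (simp add: integral_nonneg qcost_def)
qed

locale lipschitz_brenier_map =
  fixes \<mu> \<nu> :: "'a::euclidean_space measure" and \<phi> :: "'a \<Rightarrow> real" and T :: "'a \<Rightarrow> 'a"
    and r L :: real
  assumes sets_\<mu>: "sets \<mu> = sets borel" and sets_\<nu>: "sets \<nu> = sets borel"
    and prob_\<mu>: "prob_space \<mu>" and support_\<mu>: "AE x in \<mu>. x \<in> cball 0 r"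
    and convex_\<phi>: "convex_on UNIV \<phi>"
    and gradient_\<phi>: "\<And>x. (\<phi> has_derivative (\<lambda>h. T x \<bullet> h)) (at x)"
    and push_forward: "distr \<mu> borel T = \<nu>"
    and lipschitz_T: "L-lipschitz_on UNIV T"
begin

lemma radius_nonneg: "0 \<le> r"
proof (rule ccontr)
  assume "\<not> 0 \<le> r"
  then have "AE x in \<mu>. False"
    using support_\<mu> by simp
  then show False
    using prob_space.AE_False[OF prob_\<mu>] by blast
qed

lemma lipschitz_nonneg: "0 \<le> L"
  using lipschitz_T lipschitz_on_nonneg by blast

lemma continuous_T: "continuous_on UNIV T"
  using lipschitz_T by (rule lipschitz_on_continuous_on)

lemma measurable_T: "T \<in> measurable \<mu> borel"
  using borel_measurable_continuous_onI[OF continuous_T] measurable_cong_sets[OF sets_\<mu> refl]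
  by blast

lemma norm_T_le: "norm x \<le> r \<Longrightarrow> norm (T x) \<le> norm (T 0) + L * r"
  using lipschitz_onD[OF lipschitz_T, of x 0] norm_triangle_ineq2[of "T x" "T 0"]
    mult_left_mono[of "norm x" r L] lipschitz_nonneg
  by (simp add: dist_norm)

lemma support_\<nu>: "AE y in \<nu>. y \<in> cball 0 (norm (T 0) + L * r)"
proof -
  have "AE x in \<mu>. T x \<in> cball 0 (norm (T 0) + L * r)"
    using support_\<mu> by eventually_elim (simp add: norm_T_le)
  then show ?thesis
    unfolding push_forward[symmetric] by (subst AE_distr_iff[OF measurable_T]) auto
qed

lemma integral_push_forward:
  fixes f :: "'a \<Rightarrow> real"
  assumes "f \<in> borel_measurable borel"
  shows "(\<integral>y. f y \<partial>\<nu>) = (\<integral>x. f (T x) \<partial>\<mu>)"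
  using integral_distr[OF measurable_T assms] by (simp add: push_forward)

lemma integrable_\<mu>:
  "continuous_on UNIV f \<Longrightarrow> integrable \<mu> (f :: 'a \<Rightarrow> real)"
  using prob_\<mu> support_\<mu> sets_\<mu>
  by (intro integrable_continuous_AE_compact[where K = "cball 0 r"]) (auto simp: prob_space_def)

lemma continuous_transport_cost: "continuous_on UNIV (\<lambda>x. qcost x (T x))"
  unfolding qcost_def by (intro continuous_intros continuous_T)

lemma continuous_T_fst: "continuous_on UNIV (\<lambda>z::'a \<times> 'a. T (fst z))"
  by (rule continuous_on_compose2[OF continuous_T continuous_on_fst[OF continuous_on_id]]) auto

lemma continuous_cost_shift_terms:
  fixes u :: "'a \<Rightarrow> real"
  assumes "continuous_on UNIV u"
  shows "continuous_on UNIV (\<lambda>z::'a \<times> 'a. u (snd z))"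
    and "continuous_on UNIV (\<lambda>z::'a \<times> 'a. u (T (fst z)))"
    and "continuous_on UNIV (\<lambda>z::'a \<times> 'a. qcost (fst z) (snd z))"
    and "continuous_on UNIV (\<lambda>z::'a \<times> 'a. qcost (fst z) (T (fst z)))"
proof -
  show "continuous_on UNIV (\<lambda>z::'a \<times> 'a. u (snd z))"
    by (rule continuous_on_compose2[OF assms continuous_on_snd[OF continuous_on_id]]) auto
  show "continuous_on UNIV (\<lambda>z::'a \<times> 'a. u (T (fst z)))"
    by (rule continuous_on_compose2[OF assms continuous_T_fst]) auto
  show "continuous_on UNIV (\<lambda>z::'a \<times> 'a. qcost (fst z) (snd z))"
    by (rule continuous_qcost)
  show "continuous_on UNIV (\<lambda>z::'a \<times> 'a. qcost (fst z) (T (fst z)))"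
    unfolding qcost_def by (intro continuous_intros continuous_T_fst)
qed

lemma measurable_graph: "(\<lambda>x. (x, T x)) \<in> measurable \<mu> (\<mu> \<Otimes>\<^sub>M \<nu>)"
proof -
  have "T \<in> measurable \<mu> \<nu>"
    using measurable_T measurable_cong_sets[OF refl sets_\<nu>] by blast
  then show ?thesis
    by measurable
qed

lemma graph_coupling: "distr \<mu> (\<mu> \<Otimes>\<^sub>M \<nu>) (\<lambda>x. (x, T x)) \<in> couplings \<mu> \<nu>"
proof -
  have "distr \<mu> \<nu> T = distr \<mu> borel T"
    by (rule distr_cong[OF refl sets_\<nu>]) simp
  then show ?thesis
    unfolding couplings_def by (simp add: distr_distr[OF measurable_fst measurable_graph]
        distr_distr[OF measurable_snd measurable_graph] comp_def push_forward)
qed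

lemma measurable_cost: "(\<lambda>z. ennreal (qcost (fst z) (snd z))) \<in> borel_measurable (\<mu> \<Otimes>\<^sub>M \<nu>)"
proof -
  have "(\<lambda>z::'a \<times> 'a. qcost (fst z) (snd z)) \<in> borel_measurable borel"
    using continuous_qcost by (rule borel_measurable_continuous_onI)
  then have "(\<lambda>z. qcost (fst z) (snd z)) \<in> borel_measurable (\<mu> \<Otimes>\<^sub>M \<nu>)"
    by (subst measurable_cong_sets[OF sets_pair_measure_cong[OF sets_\<mu> sets_\<nu>] refl])
      (simp add: borel_prod)
  then show ?thesis
    by measurable
qed

lemma OT_le_transport_cost: "enn2real (OT \<mu> \<nu>) \<le> (\<integral>x. qcost x (T x) \<partial>\<mu>)"
proof -
  have "OT \<mu> \<nu> \<le> (\<integral>\<^sup>+ z. ennreal (qcost (fst z) (snd z)) \<partial>distr \<mu> (\<mu> \<Otimes>\<^sub>M \<nu>) (\<lambda>x. (x, T x)))"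
    unfolding OT_def by (rule INF_lower[OF graph_coupling])
  also have "\<dots> = (\<integral>\<^sup>+ x. ennreal (qcost x (T x)) \<partial>\<mu>)"
    using measurable_cost
    by (subst nn_integral_distr[OF measurable_graph])
      (simp_all add: measurable_cong_sets[OF sets_distr refl])
  also have "\<dots> = ennreal (\<integral>x. qcost x (T x) \<partial>\<mu>)"
    by (rule nn_integral_eq_integral[OF integrable_\<mu>[OF continuous_transport_cost]])
      (simp add: qcost_def)
  finally have "enn2real (OT \<mu> \<nu>) \<le> enn2real (ennreal (\<integral>x. qcost x (T x) \<partial>\<mu>))"
    by (rule enn2real_mono) simp
  moreover have "0 \<le> (\<integral>x. qcost x (T x) \<partial>\<mu>)"
    by (simp add: integral_nonneg qcost_def)
  ultimately show ?thesis
    by simp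
qed

context
  fixes \<pi> :: "('a \<times> 'a) measure"
  assumes coupling: "\<pi> \<in> couplings \<mu> \<nu>"
begin

lemma support_coupling: "AE z in \<pi>. z \<in> cball 0 r \<times> cball 0 (norm (T 0) + L * r)"
  using AE_fst_coupling[OF coupling support_\<mu>] AE_snd_coupling[OF coupling support_\<nu>]
  by eventually_elim (auto simp: mem_Times_iff)

lemma sets_\<pi>: "sets \<pi> = sets borel"
  using coupling sets_\<mu> sets_\<nu> by (rule sets_coupling)

lemma integrable_coupling:
  "continuous_on UNIV f \<Longrightarrow> integrable \<pi> (f :: 'a \<times> 'a \<Rightarrow> real)"
  using prob_space_coupling[OF coupling prob_\<mu>] sets_\<pi> support_coupling
  by (intro integrable_continuous_AE_compact[where K = "cball 0 r \<times> cball 0 (norm (T 0) + L * r)"])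
    (auto simp: prob_space_def compact_Times)

text \<open>A function of \<open>y\<close> alone has the same integral against \<open>\<pi>\<close> as against the graph coupling
  of \<open>T\<close>, since both have second marginal \<open>\<nu> = T\<^sub>#\<mu>\<close>.\<close>

lemma integral_cost_shift:
  fixes u :: "'a \<Rightarrow> real"
  assumes "continuous_on UNIV u"
  shows "(\<integral>z. (qcost (fst z) (snd z) + u (snd z)) - (qcost (fst z) (T (fst z)) + u (T (fst z))) \<partial>\<pi>)
    = (\<integral>z. qcost (fst z) (snd z) \<partial>\<pi>) - (\<integral>x. qcost x (T x) \<partial>\<mu>)"
proof -
  have u: "u \<in> borel_measurable borel" and uT: "(\<lambda>x. u (T x)) \<in> borel_measurable borel"
    using assms continuous_on_compose2[OF assms continuous_T]
    by (auto intro: borel_measurable_continuous_onI)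
  have cost_T: "(\<lambda>x. qcost x (T x)) \<in> borel_measurable borel"
    using continuous_transport_cost by (rule borel_measurable_continuous_onI)
  have "(\<integral>z. u (snd z) \<partial>\<pi>) = (\<integral>y. u y \<partial>\<nu>)"
    using u by (intro integral_snd_coupling[OF coupling]) (simp add: measurable_cong_sets[OF sets_\<nu>])
  also have "\<dots> = (\<integral>x. u (T x) \<partial>\<mu>)"
    using u by (rule integral_push_forward)
  also have "\<dots> = (\<integral>z. u (T (fst z)) \<partial>\<pi>)"
    using uT by (intro integral_fst_coupling[OF coupling, symmetric])
      (simp add: measurable_cong_sets[OF sets_\<mu>])
  finally have "(\<integral>z. u (snd z) \<partial>\<pi>) = (\<integral>z. u (T (fst z)) \<partial>\<pi>)" .
  moreover have "(\<integral>z. qcost (fst z) (T (fst z)) \<partial>\<pi>) = (\<integral>x. qcost x (T x) \<partial>\<mu>)"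
    using cost_T by (intro integral_fst_coupling[OF coupling])
      (simp add: measurable_cong_sets[OF sets_\<mu>])
  ultimately show ?thesis
    using continuous_cost_shift_terms[OF assms] by (simp add: integrable_coupling)
qed

lemma displacement_le_cost_gap_of_pos:
  assumes "0 < L'" and "L \<le> L'"
  shows "(\<integral>z. (norm (snd z - T (fst z)))\<^sup>2 \<partial>\<pi>)
    \<le> 2 * L' * ((\<integral>z. qcost (fst z) (snd z) \<partial>\<pi>) - (\<integral>x. qcost x (T x) \<partial>\<mu>))"
proof -
  define M where "M = norm (T 0) + L * r"
  define R where "R = r + 2 * M / L'"
  define u where "u y = ball_conjugate R \<phi> y - (norm y)\<^sup>2 / 2" for y
  have "0 \<le> M"
    unfolding M_def using radius_nonneg lipschitz_nonneg by simp
  then have "0 \<le> R"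
    unfolding R_def using radius_nonneg \<open>0 < L'\<close> by simp
  have lipschitz': "L'-lipschitz_on UNIV T"
    using lipschitz_on_mono[OF lipschitz_T] \<open>L \<le> L'\<close> by blast
  have "continuous_on (cball 0 R) \<phi>"
    by (rule has_derivative_continuous_on[OF has_derivative_at_withinI[OF gradient_\<phi>]])
  then have "continuous_on UNIV (ball_conjugate R \<phi>)"
    using lipschitz_ball_conjugate \<open>0 \<le> R\<close> lipschitz_on_continuous_on by blast
  then have continuous_u: "continuous_on UNIV u"
    unfolding u_def by (intro continuous_intros) auto
  have "AE z in \<pi>. (norm (snd z - T (fst z)))\<^sup>2 / (2 * L')
      \<le> (qcost (fst z) (snd z) + u (snd z)) - (qcost (fst z) (T (fst z)) + u (T (fst z)))"
    using support_coupling
  proof eventually_elim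
    case (elim z)
    obtain x y where z: "z = (x, y)" and "norm x \<le> r" and "norm y \<le> M"
      using elim by (cases z) (auto simp: M_def)
    then have "norm (y - T x) \<le> 2 * M"
      using norm_triangle_ineq4[of y "T x"] norm_T_le[of x] by (simp add: M_def)
    then have "norm (y - T x) / L' \<le> 2 * M / L'"
      using \<open>0 < L'\<close> by (simp add: divide_right_mono)
    then have "norm x + norm (y - T x) / L' \<le> R"
      using \<open>norm x \<le> r\<close> by (simp add: R_def)
    from ball_conjugate_cost_gap[OF convex_\<phi> gradient_\<phi> lipschitz' \<open>0 < L'\<close> this]
    show ?case
      unfolding z u_def by simp
  qed
  moreover have "continuous_on UNIV (\<lambda>z. (norm (snd z - T (fst z)))\<^sup>2 / (2 * L'))"
    using \<open>0 < L'\<close> by (intro continuous_intros continuous_T_fst) auto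
  moreover have "continuous_on UNIV
      (\<lambda>z. (qcost (fst z) (snd z) + u (snd z)) - (qcost (fst z) (T (fst z)) + u (T (fst z))))"
    by (intro continuous_on_diff continuous_on_add continuous_cost_shift_terms[OF continuous_u])
  ultimately have "(\<integral>z. (norm (snd z - T (fst z)))\<^sup>2 / (2 * L') \<partial>\<pi>)
      \<le> (\<integral>z. (qcost (fst z) (snd z) + u (snd z)) - (qcost (fst z) (T (fst z)) + u (T (fst z))) \<partial>\<pi>)"
    by (intro integral_mono_AE integrable_coupling)
  also have "\<dots> = (\<integral>z. qcost (fst z) (snd z) \<partial>\<pi>) - (\<integral>x. qcost x (T x) \<partial>\<mu>)"
    by (rule integral_cost_shift[OF continuous_u])
  finally show ?thesis
    using \<open>0 < L'\<close> by (simp add: field_simps)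
qed

text \<open>The pointwise bound divides by the Lipschitz constant; \<open>L = 0\<close> is reached as a limit.\<close>

lemma displacement_le_cost_gap:
  "(\<integral>z. (norm (snd z - T (fst z)))\<^sup>2 \<partial>\<pi>)
    \<le> 2 * L * ((\<integral>z. qcost (fst z) (snd z) \<partial>\<pi>) - (\<integral>x. qcost x (T x) \<partial>\<mu>))"
  (is "?I \<le> 2 * L * ?gap")
proof (rule tendsto_lowerbound)
  show "((\<lambda>L'. 2 * L' * ?gap) \<longlongrightarrow> 2 * L * ?gap) (at_right L)"
    by (intro tendsto_intros)
  show "\<forall>\<^sub>F L' in at_right L. ?I \<le> 2 * L' * ?gap"
    using eventually_at_right_less
    by eventually_elim (use lipschitz_nonneg in \<open>auto intro: displacement_le_cost_gap_of_pos\<close>)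
qed simp

lemma measurable_displacement: "(\<lambda>z. norm (snd z - T (fst z))) \<in> borel_measurable \<pi>"
proof -
  have "continuous_on UNIV (\<lambda>z. norm (snd z - T (fst z)))"
    by (intro continuous_intros continuous_T_fst)
  then show ?thesis
    by (subst measurable_cong_sets[OF sets_\<pi> refl]) (rule borel_measurable_continuous_onI)
qed

lemma integrable_displacement_sq: "integrable \<pi> (\<lambda>z. (norm (snd z - T (fst z)))\<^sup>2)"
  by (intro integrable_coupling continuous_intros continuous_T_fst)

lemma space_coupling: "space \<pi> = UNIV"
  using sets_eq_imp_space_eq[OF sets_\<pi>] by simp

lemma displacement_tail_le:
  assumes "(\<integral>z. (norm (snd z - T (fst z)))\<^sup>2 \<partial>\<pi>) \<le> B" and "0 < t"
  shows "measure \<pi> {(x, y). t \<le> norm (y - T x)} \<le> B / t\<^sup>2"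
proof -
  interpret prob_space \<pi>
    by (rule prob_space_coupling[OF coupling prob_\<mu>])
  have "{(x, y). t \<le> norm (y - T x)} = {z \<in> space \<pi>. t \<le> \<bar>norm (snd z - T (fst z))\<bar>}"
    by (auto simp: space_coupling)
  then have "measure \<pi> {(x, y). t \<le> norm (y - T x)} \<le> (\<integral>z. (norm (snd z - T (fst z)))\<^sup>2 \<partial>\<pi>) / t\<^sup>2"
    using second_moment_method[OF measurable_displacement] integrable_displacement_sq \<open>0 < t\<close>
    by simp
  also have "\<dots> \<le> B / t\<^sup>2"
    using assms(1) by (simp add: divide_right_mono)
  finally show ?thesis .
qed

lemma displacement_concentration:
  assumes "(\<integral>z. (norm (snd z - T (fst z)))\<^sup>2 \<partial>\<pi>) \<le> s\<^sup>2 * \<eta>" and "0 \<le> s" and "0 < \<eta>"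
  shows "1 - \<eta> \<le> measure \<pi> {(x, y). norm (y - T x) \<le> s}"
proof -
  interpret prob_space \<pi>
    by (rule prob_space_coupling[OF coupling prob_\<mu>])
  have "{(x, y). norm (y - T x) \<le> s} = {z \<in> space \<pi>. \<bar>norm (snd z - T (fst z))\<bar> \<le> s}"
    by (auto simp: space_coupling)
  then show ?thesis
    using prob_abs_le_ge_of_second_moment[OF measurable_displacement] integrable_displacement_sq assms
    by simp
qed

lemma displacement_concentration_powr:
  assumes "(\<integral>z. (norm (snd z - T (fst z)))\<^sup>2 \<partial>\<pi>) \<le> a * \<epsilon> powr (2 / q)"
    and "0 \<le> a" and "0 < \<eta>" and "0 < \<epsilon>"
  shows "1 - \<eta> \<le> measure \<pi> {(x, y). norm (y - T x) \<le> sqrt a * \<eta> powr (-1/2) * \<epsilon> powr (1 / q)}"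
proof (rule displacement_concentration)
  have "(\<eta> powr (-1/2))\<^sup>2 * \<eta> = 1"
    using \<open>0 < \<eta>\<close> by (simp add: power2_eq_square powr_add[symmetric] powr_minus_divide)
  moreover have "(\<epsilon> powr (1 / q))\<^sup>2 = \<epsilon> powr (2 / q)"
    by (simp add: power2_eq_square powr_add[symmetric])
  ultimately have "(sqrt a * \<eta> powr (-1/2) * \<epsilon> powr (1 / q))\<^sup>2 * \<eta> = a * \<epsilon> powr (2 / q)"
    using \<open>0 \<le> a\<close> by (simp add: power_mult_distrib)
  then show "(\<integral>z. (norm (snd z - T (fst z)))\<^sup>2 \<partial>\<pi>) \<le> (sqrt a * \<eta> powr (-1/2) * \<epsilon> powr (1 / q))\<^sup>2 * \<eta>"
    using assms(1) by simp
qed (use assms in auto)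

end

lemma optimizer_displacement_le_Delta:
  assumes "is_qot_optimizer \<epsilon> \<mu> \<nu> \<pi>" and "0 < Delta \<epsilon> \<mu> \<nu>"
  shows "(\<integral>z. (norm (snd z - T (fst z)))\<^sup>2 \<partial>\<pi>) \<le> 2 * L * Delta \<epsilon> \<mu> \<nu>"
proof -
  have coupling: "\<pi> \<in> couplings \<mu> \<nu>"
    using assms(1) by (simp add: is_qot_optimizer_def qot_admissible_def)
  \<comment> \<open>\<open>enn2real\<close> maps \<open>\<infinity>\<close> to \<open>0\<close>; positivity of \<open>Delta\<close> rules out \<open>QOT \<epsilon> \<mu> \<nu> = \<infinity>\<close>.\<close>
  have "(\<integral>z. qcost (fst z) (snd z) \<partial>\<pi>) \<le> enn2real (QOT \<epsilon> \<mu> \<nu>)"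
    using assms QOT_ne_top_of_Delta_pos
    by (intro optimizer_cost_le_QOT integrable_coupling[OF coupling] continuous_qcost)
  then have "(\<integral>z. qcost (fst z) (snd z) \<partial>\<pi>) - (\<integral>x. qcost x (T x) \<partial>\<mu>) \<le> Delta \<epsilon> \<mu> \<nu>"
    using OT_le_transport_cost by (simp add: Delta_def)
  then show ?thesis
    using displacement_le_cost_gap[OF coupling] lipschitz_nonneg
    by (smt (verit) mult_left_mono)
qed

end

lemma lipschitz_brenier_map_density:
  assumes "prob_space \<mu>" and "\<rho> \<in> borel_measurable borel" and "\<Omega> \<in> sets borel"
    and "\<Omega> \<subseteq> cball 0 r" and "\<mu> = density lborel (\<lambda>x. ennreal (\<rho> x * indicator \<Omega> x))"
    and "\<nu> = density lborel g"
    and "convex_on UNIV \<phi>" and "\<And>x. (\<phi> has_derivative (\<lambda>h. T x \<bullet> h)) (at x)"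
    and "distr \<mu> borel T = \<nu>" and "L-lipschitz_on UNIV T"
  shows "lipschitz_brenier_map \<mu> \<nu> \<phi> T r L"
proof (rule lipschitz_brenier_map.intro)
  have "AE x in \<mu>. x \<in> \<Omega>"
    unfolding assms(5) using assms(2,3) by (subst AE_density) (auto simp: indicator_def intro!: AE_I2)
  then show "AE x in \<mu>. x \<in> cball 0 r"
    by (rule eventually_mono) (use assms(4) in auto)
qed (use assms in simp_all)

theorem theorem3p9:
  fixes \<mu> \<nu> :: "'a::euclidean_space measure"
    and \<Omega> :: "'a set" and \<rho>\<^sub>\<mu> :: "'a \<Rightarrow> real" and g\<^sub>\<nu> :: "'a \<Rightarrow> ennreal"
    and lo\<^sub>\<mu> hi\<^sub>\<mu> hi\<^sub>\<nu> L C :: real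
    and \<phi> :: "'a \<Rightarrow> real" and T :: "'a \<Rightarrow> 'a"
  assumes prob_mu: "prob_space \<mu>" and prob_nu: "prob_space \<nu>"
    and Omega: "open \<Omega>" "bounded \<Omega>" "connected \<Omega>" "lipschitz_domain \<Omega>" "\<Omega> \<subseteq> ball 0 1"
    and rho_meas: "\<rho>\<^sub>\<mu> \<in> borel_measurable borel"
    and mu_def: "\<mu> = density lborel (\<lambda>x. ennreal (\<rho>\<^sub>\<mu> x * indicator \<Omega> x))"
    and rho_bounds: "0 < lo\<^sub>\<mu>" "lo\<^sub>\<mu> \<le> hi\<^sub>\<mu>"
      "AE x in lborel. x \<in> \<Omega> \<longrightarrow> lo\<^sub>\<mu> \<le> \<rho>\<^sub>\<mu> x \<and> \<rho>\<^sub>\<mu> x \<le> hi\<^sub>\<mu>"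
    and g_meas: "g\<^sub>\<nu> \<in> borel_measurable borel"
    and nu_def: "\<nu> = density lborel g\<^sub>\<nu>"
    and nu_spt: "spt \<nu> \<subseteq> ball 0 1"
    and nu_dens_bound: "AE y in lborel. y \<in> spt \<nu> \<longrightarrow> g\<^sub>\<nu> y \<le> ennreal hi\<^sub>\<nu>"
    and phi_convex: "convex_on UNIV \<phi>"
    and T_grad: "\<And>x. (\<phi> has_derivative (\<lambda>h. T x \<bullet> h)) (at x)"
    and T_push: "distr \<mu> borel T = \<nu>"
    and T_lip: "L-lipschitz_on UNIV T"
    and C_pos: "C > 0"
    and C_val: "\<And>\<epsilon>. \<epsilon> \<in> {0<..1} \<Longrightarrow>
        (1 / C) * \<epsilon> powr (2 / (2 + real DIM('a))) \<le> Delta \<epsilon> \<mu> \<nu> \<and>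
        Delta \<epsilon> \<mu> \<nu> \<le> C * \<epsilon> powr (2 / (2 + real DIM('a)))"
  shows "\<forall>\<epsilon> \<pi>. \<epsilon> \<in> {0<..1} \<and> is_qot_optimizer \<epsilon> \<mu> \<nu> \<pi> \<longrightarrow>
           (\<forall>t>0. measure \<pi> {(x, y). norm (y - T x) \<ge> t}
                    \<le> 2 * L * C / t\<^sup>2 * \<epsilon> powr (2 / (real DIM('a) + 2))) \<and>
           (\<forall>\<eta>\<in>{0<..<1}. measure \<pi> {(x, y). norm (y - T x)
                    \<le> sqrt (2 * L * C) * \<eta> powr (-1/2) * \<epsilon> powr (1 / (real DIM('a) + 2))}
                    \<ge> 1 - \<eta>)"
proof (intro allI impI)
  fix \<epsilon> :: real and \<pi> :: "('a \<times> 'a) measure"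
  assume "\<epsilon> \<in> {0<..1} \<and> is_qot_optimizer \<epsilon> \<mu> \<nu> \<pi>"
  then have \<epsilon>: "\<epsilon> \<in> {0<..1}" and optimizer: "is_qot_optimizer \<epsilon> \<mu> \<nu> \<pi>"
    by auto
  interpret lipschitz_brenier_map \<mu> \<nu> \<phi> T 1 L
    using Omega(5) by (intro lipschitz_brenier_map_density[OF prob_mu rho_meas borel_open[OF Omega(1)]
        _ mu_def nu_def phi_convex T_grad T_push T_lip]) auto
  have coupling: "\<pi> \<in> couplings \<mu> \<nu>"
    using optimizer by (simp add: is_qot_optimizer_def qot_admissible_def)
  define p where "p = 2 / (real DIM('a) + 2)"
  have Delta: "(1 / C) * \<epsilon> powr p \<le> Delta \<epsilon> \<mu> \<nu>" "Delta \<epsilon> \<mu> \<nu> \<le> C * \<epsilon> powr p"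
    using C_val[OF \<epsilon>] by (simp_all add: p_def add.commute)
  have "0 < Delta \<epsilon> \<mu> \<nu>"
    using \<epsilon> C_pos by (intro less_le_trans[OF _ Delta(1)]) simp
  then have "(\<integral>z. (norm (snd z - T (fst z)))\<^sup>2 \<partial>\<pi>) \<le> 2 * L * Delta \<epsilon> \<mu> \<nu>"
    by (rule optimizer_displacement_le_Delta[OF optimizer])
  also have "\<dots> \<le> 2 * L * C * \<epsilon> powr p"
    using Delta(2) lipschitz_nonneg mult_left_mono[of _ _ "2 * L"] by (simp add: mult.assoc)
  finally have moment: "(\<integral>z. (norm (snd z - T (fst z)))\<^sup>2 \<partial>\<pi>) \<le> 2 * L * C * \<epsilon> powr p" .
  show "(\<forall>t>0. measure \<pi> {(x, y). norm (y - T x) \<ge> t} \<le> 2 * L * C / t\<^sup>2 * \<epsilon> powr p) \<and>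
      (\<forall>\<eta>\<in>{0<..<1}. measure \<pi> {(x, y). norm (y - T x)
         \<le> sqrt (2 * L * C) * \<eta> powr (-1/2) * \<epsilon> powr (1 / (real DIM('a) + 2))} \<ge> 1 - \<eta>)"
  proof (intro conjI allI impI ballI)
    fix t :: real assume "0 < t"
    then show "measure \<pi> {(x, y). norm (y - T x) \<ge> t} \<le> 2 * L * C / t\<^sup>2 * \<epsilon> powr p"
      using displacement_tail_le[OF coupling moment] by simp
  next
    fix \<eta> :: real assume "\<eta> \<in> {0<..<1}"
    then show "measure \<pi> {(x, y). norm (y - T x)
        \<le> sqrt (2 * L * C) * \<eta> powr (-1/2) * \<epsilon> powr (1 / (real DIM('a) + 2))} \<ge> 1 - \<eta>"
      using displacement_concentration_powr[OF coupling moment[unfolded p_def]]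
        lipschitz_nonneg C_pos \<epsilon> by simp
  qed
qed

end
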